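(* Let $n\ge4$ be an even integer. For $1\le r\le n-1$ let $U^r_n=\{(k,a,b)\in(\mathbb{R}\setminus(B_n\cup C_n))\times\mathbb{R}\times\mathbb{R}: k\neq0,\ \mathrm{rank}(B^{(k,a,b)}_n)\le r,\ 4a^3+27b^2=0\}\setminus\{(k,0,0):k\in\mathbb{R}\}$. Then (a) $U^{n-1}_n=\{(k,a^{(n)}_{k,2},b^{(n)}_{k,2}): k\in\mathbb{R}\setminus(B_n\cup C_n)\}\cup\{(k,a^{(n)}_{k,3},b^{(n)}_{k,3}): k\in\mathbb{R}\setminus(B_n\cup C_n)\}$; (b) the matrix $B^{(k,a,b)}_n$ has rank exactly $n-1$ for all but finitely many triples $(k,a,b)\in U^{n-1}_n$; (c) for each $1\le r\le n-2$, the matrix $B^{(k,a,b)}_n$ has rank $r$ for only finitely many triples $(k,a,b)\in U^{n-1}_n$.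
   Context: For real $k,a,b$, the generalized $k$-FL sequence is $S^{(a,b)}_{k,0}=2b$, $S^{(a,b)}_{k,1}=bk+a$, $S^{(a,b)}_{k,m}=kS^{(a,b)}_{k,m-1}+S^{(a,b)}_{k,m-2}$. $B^{(k,a,b)}_n$ is the $n\times n$ circulant matrix whose $(i,j)$ entry is $S^{(a,b)}_{k,j-i+1}$ if $j\ge i$ and $S^{(a,b)}_{k,n+j-i+1}$ if $j<i$. Define $f_m,g_m\in\mathbb{Z}[T]$ by $f_0=0,f_1=1,g_0=2,g_1=T$, $f_m=Tf_{m-1}+f_{m-2}$, $g_m=Tg_{m-1}+g_{m-2}$; $F_n=f_{n+1}-f_n$, $G_n=g_{n+1}-g_n$, $P_n=f_{n+1}+f_n$, $Q_n=g_{n+1}+g_n$. $B_n=\{k: F_n(k)-1=0\text{ or }G_n(k)-k+2=0\}$, $C_n=\{k: P_n(k)-1=0\text{ or }Q_n(k)-k-2=0\}$. Type 2 pair: $a^{(n)}_{k,2}=-\frac{27(F_n(k)-1)^2}{4(G_n(k)-k+2)^2}$, $b^{(n)}_{k,2}=\frac{27(F_n(k)-1)^3}{4(G_n(k)-k+2)^3}$; Type 3 pair: $a^{(n)}_{k,3}=-\frac{27(P_n(k)-1)^2}{4(Q_n(k)-k-2)^2}$, $b^{(n)}_{k,3}=\frac{27(P_n(k)-1)^3}{4(Q_n(k)-k-2)^3}$. The condition $4a^3+27b^2=0$ means the curve $y^2=x^3+ax+b$ is singular. *)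

theory Defs
  imports "Jordan_Normal_Form.DL_Rank" "HOL-Computational_Algebra.Polynomial"
begin

fun FLseq :: "real \<Rightarrow> real \<Rightarrow> real \<Rightarrow> nat \<Rightarrow> real" where
  "FLseq k a b 0 = 2 * b"
| "FLseq k a b (Suc 0) = b * k + a"
| "FLseq k a b (Suc (Suc m)) = k * FLseq k a b (Suc m) + FLseq k a b m"

text \<open>The n x n circulant matrix B_n^(k,a,b); indices are 0-based here,
  entry (i,j) is S_{j-i+1} if j >= i and S_{n+j-i+1} if j < i.\<close>
definition Bmat :: "nat \<Rightarrow> real \<Rightarrow> real \<Rightarrow> real \<Rightarrow> real mat" where
  "Bmat n k a b = mat n n (\<lambda>(i, j).
     if j \<ge> i then FLseq k a b (j - i + 1) else FLseq k a b (n + j - i + 1))"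

definition matrank :: "nat \<Rightarrow> real mat \<Rightarrow> nat" where
  "matrank n A = vec_space.rank n A"

fun fpoly :: "nat \<Rightarrow> int poly" where
  "fpoly 0 = 0"
| "fpoly (Suc 0) = 1"
| "fpoly (Suc (Suc m)) = [:0, 1:] * fpoly (Suc m) + fpoly m"

fun gpoly :: "nat \<Rightarrow> int poly" where
  "gpoly 0 = [:2:]"
| "gpoly (Suc 0) = [:0, 1:]"
| "gpoly (Suc (Suc m)) = [:0, 1:] * gpoly (Suc m) + gpoly m"

definition Fp :: "nat \<Rightarrow> int poly" where "Fp n = fpoly (n + 1) - fpoly n"
definition Gp :: "nat \<Rightarrow> int poly" where "Gp n = gpoly (n + 1) - gpoly n"
definition Pp :: "nat \<Rightarrow> int poly" where "Pp n = fpoly (n + 1) + fpoly n"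
definition Qp :: "nat \<Rightarrow> int poly" where "Qp n = gpoly (n + 1) + gpoly n"

definition ev :: "int poly \<Rightarrow> real \<Rightarrow> real" where
  "ev p k = poly (map_poly of_int p) k"

definition Bset :: "nat \<Rightarrow> real set" where
  "Bset n = {k. ev (Fp n) k - 1 = 0 \<or> ev (Gp n) k - k + 2 = 0}"

definition Cset :: "nat \<Rightarrow> real set" where
  "Cset n = {k. ev (Pp n) k - 1 = 0 \<or> ev (Qp n) k - k - 2 = 0}"

definition a2 :: "nat \<Rightarrow> real \<Rightarrow> real" where
  "a2 n k = - (27 * (ev (Fp n) k - 1)^2) / (4 * (ev (Gp n) k - k + 2)^2)"
definition b2 :: "nat \<Rightarrow> real \<Rightarrow> real" where
  "b2 n k = (27 * (ev (Fp n) k - 1)^3) / (4 * (ev (Gp n) k - k + 2)^3)"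
definition a3 :: "nat \<Rightarrow> real \<Rightarrow> real" where
  "a3 n k = - (27 * (ev (Pp n) k - 1)^2) / (4 * (ev (Qp n) k - k - 2)^2)"
definition b3 :: "nat \<Rightarrow> real \<Rightarrow> real" where
  "b3 n k = (27 * (ev (Pp n) k - 1)^3) / (4 * (ev (Qp n) k - k - 2)^3)"

definition Uset :: "nat \<Rightarrow> nat \<Rightarrow> (real \<times> real \<times> real) set" where
  "Uset n r = {(k, a, b). k \<notin> Bset n \<union> Cset n \<and> k \<noteq> 0 \<and>
      matrank n (Bmat n k a b) \<le> r \<and> 4 * a^3 + 27 * b^2 = 0}
    - {(k, 0, 0) | k. True}"

end

theory Submission
  imports Defs
begin

text \<open>Writing $S_m = b\,g_m(k) + a\,f_m(k)$, the recurrence $S_{m+2} = k S_{m+1} + S_m$ telescopes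
  the equations of a kernel vector $x$ of the circulant matrix, extended $n$-periodically, into the
  first-order recurrence $u\,x_t + v\,x_{t+1} = 0$ with $u = S_1 - S_{n+1}$ and $v = S_0 - S_n$.
  A nonzero periodic solution forces $u = v$ or $u = -v$, which are exactly the lines
  $a(F_n - 1) + b(G_n - k + 2) = 0$ and $a(P_n - 1) + b(Q_n - k - 2) = 0$; conversely on these lines
  the vectors $((-1)^j)_j$ (as $n$ is even) and $(1)_j$ lie in the kernel. Each line meets the
  singular locus $4a^3 + 27b^2 = 0$ away from the origin in exactly the type 2, resp. type 3, point.
  Finally $k \sum_{m<n} S_{m+1}^2 = S_n S_{n+1} - S_0 S_1$ shows $(u, v) \neq (0, 0)$ when $k \neq 0$
  and $(a, b) \neq (0, 0)$, so a kernel vector with one vanishing entry vanishes and the rank is at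
  least $n - 1$. Hence every matrix indexed by $U^{n-1}_n$ has rank exactly $n - 1$, and the
  sets in (b) and (c) are empty.\<close>

lemma first_order_recurrence_closed_form:
  fixes x :: "nat \<Rightarrow> 'a::field"
  assumes "\<And>i. u * x i + v * x (Suc i) = 0" and "v \<noteq> 0"
  shows "x i = (- u / v) ^ i * x 0"
proof (induction i)
  case (Suc i)
  have "v * x (Suc i) = - (u * x i)"
    using assms(1)[of i] by (simp add: eq_neg_iff_add_eq_0 add.commute)
  then have "x (Suc i) = - u / v * x i"
    using \<open>v \<noteq> 0\<close> by (simp add: field_simps)
  then show ?case using Suc by simp
qed simp

lemma periodic_first_order_recurrence_vanishing:
  fixes x :: "nat \<Rightarrow> 'a::field"
  assumes rec: "\<And>i. u * x i + v * x (Suc i) = 0" and "u \<noteq> 0 \<or> v \<noteq> 0"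
    and "x n = x 0" and "n > 0" and "x j = 0"
  shows "x i = 0"
proof (cases "v = 0")
  case True
  then show ?thesis using rec[of i] \<open>u \<noteq> 0 \<or> v \<noteq> 0\<close> by simp
next
  case False
  note closed = first_order_recurrence_closed_form[of u x v, OF rec False]
  have "x 0 = 0"
  proof (cases "u = 0")
    case True
    then show ?thesis
      using rec[of "n - 1"] False \<open>x n = x 0\<close> \<open>n > 0\<close> by simp
  next
    case False
    then show ?thesis using closed[of j] \<open>x j = 0\<close> \<open>v \<noteq> 0\<close> by simp
  qed
  then show ?thesis using closed[of i] by simp
qed

lemma periodic_first_order_recurrence_coeffs:
  fixes x :: "nat \<Rightarrow> 'a::linordered_field"
  assumes rec: "\<And>i. u * x i + v * x (Suc i) = 0"
    and "x n = x 0" and "n > 0" and "x j \<noteq> 0"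
  shows "u = v \<or> u = - v"
proof (cases "v = 0")
  case True
  then show ?thesis using rec[of j] \<open>x j \<noteq> 0\<close> by simp
next
  case False
  note closed = first_order_recurrence_closed_form[of u x v, OF rec False]
  have "x 0 \<noteq> 0" using closed[of j] \<open>x j \<noteq> 0\<close> by auto
  then have "(- u / v) ^ n = 1" using closed[of n] \<open>x n = x 0\<close> by simp
  then have "\<bar>- u / v\<bar> ^ n = 1 ^ n" by (metis abs_one power_abs power_one)
  then have "\<bar>- u / v\<bar> = 1"
    by (rule power_eq_imp_eq_base[OF _ _ _ \<open>n > 0\<close>]) simp_all
  then have "\<bar>u\<bar> = \<bar>v\<bar>" using False by (simp add: abs_div)
  then show ?thesis by linarith
qed

lemma sum_lessThan_circular_shift:
  assumes "i < (n::nat)"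
  shows "(\<Sum>j<n. h ((j + n - i) mod n) j) = (\<Sum>m<n. h m ((i + m) mod n))"
proof (rule sum.reindex_bij_witness[where i = "\<lambda>m. (i + m) mod n" and j = "\<lambda>j. (j + n - i) mod n"])
  show "((i + m) mod n + n - i) mod n = m" if "m \<in> {..<n}" for m
    using that assms by (cases "i + m < n") (simp_all add: mod_if add.commute)
  show j: "(i + (j + n - i) mod n) mod n = j" if "j \<in> {..<n}" for j
  proof (cases "j < i")
    case False
    then have "(j + n - i) mod n = j - i"
      using that by (simp add: mod_if)
    then show ?thesis using that False by simp
  qed (use that assms in simp)
  show "h ((j + n - i) mod n) ((i + (j + n - i) mod n) mod n) = h ((j + n - i) mod n) j"
    if "j \<in> {..<n}" for j
    using j[OF that] by simp
qed auto

lemma neg_one_power_mod_even: "even n \<Longrightarrow> (-1::'a::ring_1) ^ (t mod n) = (-1) ^ t"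
  by (simp add: minus_one_power_iff dvd_mod_iff)

lemma rank_lt_iff_nontrivial_kernel:
  fixes A :: "'a::field mat"
  assumes "A \<in> carrier_mat n n"
  shows "vec_space.rank n A < n \<longleftrightarrow> (\<exists>w \<in> carrier_vec n. w \<noteq> 0\<^sub>v n \<and> A *\<^sub>v w = 0\<^sub>v n)"
proof -
  have "vec_space.rank n A \<le> n" by (rule vec_space.rank_le_nc[OF assms])
  then have "vec_space.rank n A < n \<longleftrightarrow> det A = 0"
    using vec_space.det_rank_iff[OF assms] by auto
  then show ?thesis using det_0_iff_vec_prod_zero_field[OF assms] by auto
qed

lemma (in vec_space) cols_lin_indpt_if_trivial_kernel:
  fixes A :: "'a mat"
  assumes A: "A \<in> carrier_mat n m"
    and ker: "\<And>w. w \<in> carrier_vec m \<Longrightarrow> A *\<^sub>v w = 0\<^sub>v n \<Longrightarrow> w = 0\<^sub>v m"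
  shows "distinct (cols A)" and "lin_indpt (set (cols A))"
proof -
  show dist: "distinct (cols A)"
  proof (rule ccontr)
    assume "\<not> distinct (cols A)"
    then obtain i j where ij: "i \<noteq> j" "i < m" "j < m" "col A i = col A j"
      using A by (auto simp: distinct_conv_nth)
    define w :: "'a vec" where "w = unit_vec m i - unit_vec m j"
    have w: "w \<in> carrier_vec m" by (simp add: w_def)
    have "A *\<^sub>v unit_vec m l = col A l" if "l < m" for l
      by (rule eq_vecI) (use A that in \<open>simp_all add: scalar_prod_right_unit\<close>)
    then have "A *\<^sub>v w = 0\<^sub>v n"
      using A ij by (simp add: w_def mult_minus_distrib_mat_vec)
    then have "w = 0\<^sub>v m" using ker w by blast
    then have "w $ i = 0" using ij by simp
    then show False using ij by (simp add: w_def)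
  qed
  show "lin_indpt (set (cols A))"
  proof
    assume "lin_dep (set (cols A))"
    then obtain w where "w \<in> carrier_vec m" "w \<noteq> 0\<^sub>v m" "A *\<^sub>v w = 0\<^sub>v n"
      using lin_depE[OF A _ dist] by blast
    then show False using ker by blast
  qed
qed

lemma rank_ge_if_kernel_trivial_on_last_coordinate:
  fixes A :: "'a::field mat"
  assumes A: "A \<in> carrier_mat n n"
    and ker: "\<And>w. w \<in> carrier_vec n \<Longrightarrow> A *\<^sub>v w = 0\<^sub>v n \<Longrightarrow> w $ (n - 1) = 0 \<Longrightarrow> w = 0\<^sub>v n"
  shows "n - 1 \<le> vec_space.rank n A"
proof -
  interpret vec_space "TYPE('a)" n .
  define B where "B = mat n (n - 1) (\<lambda>(i, j). A $$ (i, j))"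
  have B: "B \<in> carrier_mat n (n - 1)" by (simp add: B_def)
  define pad where "pad w = vec n (\<lambda>j. if j < n - 1 then w $ j else 0)" for w :: "'a vec"
  have B_pad: "B *\<^sub>v w = A *\<^sub>v pad w" if "w \<in> carrier_vec (n - 1)" for w
  proof (rule eq_vecI)
    fix r assume "r < dim_vec (A *\<^sub>v pad w)"
    then have r: "r < n" using A by simp
    have "(B *\<^sub>v w) $ r = (\<Sum>j<n - 1. A $$ (r, j) * w $ j)"
      using B r that by (simp add: B_def scalar_prod_def lessThan_atLeast0)
    also have "\<dots> = (\<Sum>j<n. A $$ (r, j) * pad w $ j)"
      by (rule sum.mono_neutral_cong_left) (auto simp: pad_def)
    also have "\<dots> = (A *\<^sub>v pad w) $ r"
      using A r by (simp add: pad_def scalar_prod_def lessThan_atLeast0)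
    finally show "(B *\<^sub>v w) $ r = (A *\<^sub>v pad w) $ r" .
  qed (use A B in simp)
  have "w = 0\<^sub>v (n - 1)" if w: "w \<in> carrier_vec (n - 1)" "B *\<^sub>v w = 0\<^sub>v n" for w
  proof (rule eq_vecI)
    fix j assume "j < dim_vec (0\<^sub>v (n - 1))"
    then have j: "j < n - 1" by simp
    have "pad w = 0\<^sub>v n"
      by (rule ker) (use w B_pad j in \<open>auto simp: pad_def\<close>)
    moreover have "pad w $ j = w $ j" using j by (simp add: pad_def)
    ultimately show "w $ j = 0\<^sub>v (n - 1) $ j" using j by simp
  qed (use w in simp)
  then have indpt: "distinct (cols B)" "lin_indpt (set (cols B))"
    using cols_lin_indpt_if_trivial_kernel[OF B] by blast+
  have "cols B = take (n - 1) (cols A)"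
    using A B by (intro nth_equalityI) (auto simp: B_def)
  then have "set (cols B) \<subseteq> set (cols A)" by (simp add: set_take_subset)
  then have "card (set (cols B)) \<le> rank A"
    by (rule rank_ge_card_indpt[OF A _ indpt(2)])
  then show ?thesis using distinct_card[OF indpt(1)] B by simp
qed

lemma singular_curve_point_on_line_unique:
  fixes a b \<alpha> \<beta> :: real
  assumes "\<alpha> \<noteq> 0" and "\<beta> \<noteq> 0" and line: "a * \<alpha> + b * \<beta> = 0"
    and curve: "4 * a^3 + 27 * b^2 = 0" and "a \<noteq> 0 \<or> b \<noteq> 0"
  shows "a = - (27 * \<alpha>^2) / (4 * \<beta>^2) \<and> b = (27 * \<alpha>^3) / (4 * \<beta>^3)"
proof -
  have a: "a = - b * \<beta> / \<alpha>" using line \<open>\<alpha> \<noteq> 0\<close> by (simp add: field_simps)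
  then have "b \<noteq> 0" using \<open>a \<noteq> 0 \<or> b \<noteq> 0\<close> by auto
  have "b^2 * (27 * \<alpha>^3 - 4 * b * \<beta>^3) = 0"
    using curve \<open>\<alpha> \<noteq> 0\<close> unfolding a by (simp add: field_simps power3_eq_cube power2_eq_square)
  then have b: "b = (27 * \<alpha>^3) / (4 * \<beta>^3)"
    using \<open>b \<noteq> 0\<close> \<open>\<beta> \<noteq> 0\<close> by (simp add: field_simps)
  have "a = - ((27 * \<alpha>^3) / (4 * \<beta>^3)) * \<beta> / \<alpha>" using a b by simp
  also have "\<dots> = - (27 * \<alpha>^2) / (4 * \<beta>^2)"
    using \<open>\<alpha> \<noteq> 0\<close> \<open>\<beta> \<noteq> 0\<close> by (simp add: field_simps power3_eq_cube power2_eq_square)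
  finally show ?thesis using b by simp
qed

lemma singular_curve_point_on_line:
  fixes \<alpha> \<beta> :: real
  assumes "\<alpha> \<noteq> 0" and "\<beta> \<noteq> 0"
  defines "a \<equiv> - (27 * \<alpha>^2) / (4 * \<beta>^2)" and "b \<equiv> (27 * \<alpha>^3) / (4 * \<beta>^3)"
  shows "a * \<alpha> + b * \<beta> = 0" and "4 * a^3 + 27 * b^2 = 0" and "a \<noteq> 0"
  unfolding a_def b_def using assms(1,2)
  by (simp_all add: field_simps power3_eq_cube power2_eq_square)

lemma ev_add [simp]: "ev (p + q) k = ev p k + ev q k"
proof -
  have "map_poly (of_int :: int \<Rightarrow> real) (p + q) = map_poly of_int p + map_poly of_int q"
    by (rule poly_eqI) (simp add: coeff_map_poly)
  then show ?thesis by (simp add: ev_def)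
qed

lemma ev_diff [simp]: "ev (p - q) k = ev p k - ev q k"
proof -
  have "map_poly (of_int :: int \<Rightarrow> real) (p - q) = map_poly of_int p - map_poly of_int q"
    by (rule poly_eqI) (simp add: coeff_map_poly)
  then show ?thesis by (simp add: ev_def)
qed

lemma ev_pCons [simp]: "ev (pCons c p) k = of_int c + k * ev p k"
  by (simp add: ev_def map_poly_pCons)

lemma ev_0 [simp]: "ev 0 k = 0" and ev_1 [simp]: "ev 1 k = 1"
  by (simp_all add: ev_def)

lemma FLseq_eq_ev: "FLseq k a b m = b * ev (gpoly m) k + a * ev (fpoly m) k"
  by (induction m rule: fpoly.induct) (simp_all add: algebra_simps)

lemma FLseq_Suc_diff: "FLseq k a b (Suc n) - FLseq k a b n = b * ev (Gp n) k + a * ev (Fp n) k"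
  by (simp add: FLseq_eq_ev Gp_def Fp_def algebra_simps)

lemma FLseq_Suc_add: "FLseq k a b (Suc n) + FLseq k a b n = b * ev (Qp n) k + a * ev (Pp n) k"
  by (simp add: FLseq_eq_ev Qp_def Pp_def algebra_simps)

lemma FLseq_boundary_eq_iff:
  "FLseq k a b 1 - FLseq k a b (Suc n) = FLseq k a b 0 - FLseq k a b n
    \<longleftrightarrow> a * (ev (Fp n) k - 1) + b * (ev (Gp n) k - k + 2) = 0"
  using FLseq_Suc_diff[of k a b n] by (auto simp: algebra_simps)

lemma FLseq_boundary_eq_neg_iff:
  "FLseq k a b 1 - FLseq k a b (Suc n) = - (FLseq k a b 0 - FLseq k a b n)
    \<longleftrightarrow> a * (ev (Pp n) k - 1) + b * (ev (Qp n) k - k - 2) = 0"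
  using FLseq_Suc_add[of k a b n] by (auto simp: algebra_simps)

lemma ev_fpoly_0: "ev (fpoly m) 0 = (if odd m then 1 else 0)"
  by (induction m rule: fpoly.induct) simp_all

lemma zero_mem_Bset: "even n \<Longrightarrow> 0 \<in> Bset n"
  by (simp add: Bset_def Fp_def ev_fpoly_0)

lemma FLseq_telescope:
  "(\<Sum>m<N. FLseq k a b (Suc m) * z m) - k * (\<Sum>m<N. FLseq k a b (Suc m) * z (Suc m))
     - (\<Sum>m<N. FLseq k a b (Suc m) * z (Suc (Suc m)))
   = FLseq k a b 1 * z 0 + FLseq k a b 0 * z 1 - FLseq k a b (Suc N) * z N - FLseq k a b N * z (Suc N)"
  by (induction N) (simp_all add: algebra_simps)

lemma FLseq_sum:
  "k * (\<Sum>m<N. FLseq k a b (Suc m)) = FLseq k a b (Suc N) + FLseq k a b N - FLseq k a b 1 - FLseq k a b 0"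
  by (induction N) (simp_all add: algebra_simps)

lemma FLseq_alternating_sum:
  "k * (\<Sum>m<N. (-1) ^ m * FLseq k a b (Suc m))
     = (-1) ^ Suc N * (FLseq k a b (Suc N) - FLseq k a b N) + FLseq k a b 1 - FLseq k a b 0"
  by (induction N) (simp_all add: algebra_simps)

lemma FLseq_sum_squares:
  "k * (\<Sum>m<N. (FLseq k a b (Suc m))\<^sup>2) = FLseq k a b N * FLseq k a b (Suc N) - FLseq k a b 0 * FLseq k a b 1"
  by (induction N) (simp_all add: algebra_simps power2_eq_square)

lemma FLseq_boundary_nonzero:
  assumes "k \<noteq> 0" and "n \<ge> 2" and "a \<noteq> 0 \<or> b \<noteq> 0"
  shows "FLseq k a b 1 - FLseq k a b (Suc n) \<noteq> 0 \<or> FLseq k a b 0 - FLseq k a b n \<noteq> 0"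
proof (rule ccontr)
  assume "\<not> ?thesis"
  then have "k * (\<Sum>m<n. (FLseq k a b (Suc m))\<^sup>2) = 0"
    by (simp add: FLseq_sum_squares)
  then have vanish: "FLseq k a b (Suc m) = 0" if "m < n" for m
    using \<open>k \<noteq> 0\<close> that by (simp add: sum_nonneg_eq_0_iff)
  have "FLseq k a b (Suc 0) = 0" "FLseq k a b (Suc (Suc 0)) = 0"
    using vanish[of 0] vanish[of 1] \<open>n \<ge> 2\<close> by simp_all
  then show False
    using \<open>a \<noteq> 0 \<or> b \<noteq> 0\<close> by simp
qed

lemma Bmat_index:
  assumes "i < n" and "j < n"
  shows "Bmat n k a b $$ (i, j) = FLseq k a b (Suc ((j + n - i) mod n))"
  using assms by (auto simp: Bmat_def mod_if) (simp add: add.commute)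

lemma Bmat_carrier: "Bmat n k a b \<in> carrier_mat n n"
  and dim_row_Bmat [simp]: "dim_row (Bmat n k a b) = n"
  and dim_col_Bmat [simp]: "dim_col (Bmat n k a b) = n"
  by (simp_all add: Bmat_def)

lemma Bmat_mult_vec_index:
  assumes "w \<in> carrier_vec n" and "i < n"
  shows "(Bmat n k a b *\<^sub>v w) $ i = (\<Sum>m<n. FLseq k a b (Suc m) * w $ ((i + m) mod n))"
proof -
  have "(Bmat n k a b *\<^sub>v w) $ i = (\<Sum>j<n. FLseq k a b (Suc ((j + n - i) mod n)) * w $ j)"
    using assms by (simp add: Bmat_index scalar_prod_def lessThan_atLeast0)
  also have "\<dots> = (\<Sum>m<n. FLseq k a b (Suc m) * w $ ((i + m) mod n))"
    by (rule sum_lessThan_circular_shift[OF \<open>i < n\<close>])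
  finally show ?thesis .
qed

lemma Bmat_kernel_iff:
  assumes "w \<in> carrier_vec n"
  shows "Bmat n k a b *\<^sub>v w = 0\<^sub>v n
    \<longleftrightarrow> (\<forall>i. (\<Sum>m<n. FLseq k a b (Suc m) * w $ ((i + m) mod n)) = 0)"
proof
  assume ker: "Bmat n k a b *\<^sub>v w = 0\<^sub>v n"
  show "\<forall>i. (\<Sum>m<n. FLseq k a b (Suc m) * w $ ((i + m) mod n)) = 0"
  proof (cases "n = 0")
    case False
    show ?thesis
    proof
      fix i
      have "(\<Sum>m<n. FLseq k a b (Suc m) * w $ ((i + m) mod n))
          = (\<Sum>m<n. FLseq k a b (Suc m) * w $ ((i mod n + m) mod n))"
        by (simp add: mod_add_left_eq)
      also have "\<dots> = (Bmat n k a b *\<^sub>v w) $ (i mod n)"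
        using assms False by (simp only: Bmat_mult_vec_index mod_less_divisor neq0_conv)
      also have "\<dots> = 0" using ker False by simp
      finally show "(\<Sum>m<n. FLseq k a b (Suc m) * w $ ((i + m) mod n)) = 0" .
    qed
  qed simp
next
  assume eqs: "\<forall>i. (\<Sum>m<n. FLseq k a b (Suc m) * w $ ((i + m) mod n)) = 0"
  show "Bmat n k a b *\<^sub>v w = 0\<^sub>v n"
  proof (rule eq_vecI)
    fix i assume "i < dim_vec (0\<^sub>v n)"
    then show "(Bmat n k a b *\<^sub>v w) $ i = 0\<^sub>v n $ i"
      using Bmat_mult_vec_index[OF assms, of i] eqs by simp
  qed simp
qed

lemma Bmat_kernel_recurrence:
  assumes "w \<in> carrier_vec n" and "Bmat n k a b *\<^sub>v w = 0\<^sub>v n"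
  shows "(FLseq k a b 1 - FLseq k a b (Suc n)) * w $ (t mod n)
       + (FLseq k a b 0 - FLseq k a b n) * w $ (Suc t mod n) = 0"
proof -
  define z where "z m = w $ ((t + m) mod n)" for m
  have eqs: "(\<Sum>m<n. FLseq k a b (Suc m) * w $ ((i + m) mod n)) = 0" for i
    using assms Bmat_kernel_iff by blast
  have "(\<Sum>m<n. FLseq k a b (Suc m) * z m) - k * (\<Sum>m<n. FLseq k a b (Suc m) * z (Suc m))
     - (\<Sum>m<n. FLseq k a b (Suc m) * z (Suc (Suc m))) = 0"
    using eqs[of t] eqs[of "Suc t"] eqs[of "Suc (Suc t)"] by (simp add: z_def)
  then have "FLseq k a b 1 * z 0 + FLseq k a b 0 * z 1 - FLseq k a b (Suc n) * z n
      - FLseq k a b n * z (Suc n) = 0"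
    by (simp only: FLseq_telescope)
  moreover have "z n = z 0" by (simp add: z_def)
  moreover have "z (Suc n) = z 1"
    unfolding z_def by (metis add.assoc add.commute mod_add_self2 plus_1_eq_Suc)
  ultimately show ?thesis by (simp add: z_def algebra_simps)
qed

lemma Bmat_kernel_boundary:
  assumes "w \<in> carrier_vec n" and "w \<noteq> 0\<^sub>v n" and "Bmat n k a b *\<^sub>v w = 0\<^sub>v n"
  shows "FLseq k a b 1 - FLseq k a b (Suc n) = FLseq k a b 0 - FLseq k a b n
       \<or> FLseq k a b 1 - FLseq k a b (Suc n) = - (FLseq k a b 0 - FLseq k a b n)"
proof -
  obtain j where j: "j < n" "w $ j \<noteq> 0"
    using assms(1,2) by (metis carrier_vecD eq_vecI index_zero_vec)
  define x where "x t = w $ (t mod n)" for t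
  show ?thesis
  proof (rule periodic_first_order_recurrence_coeffs)
    show "(FLseq k a b 1 - FLseq k a b (Suc n)) * x t + (FLseq k a b 0 - FLseq k a b n) * x (Suc t) = 0" for t
      unfolding x_def by (rule Bmat_kernel_recurrence[OF assms(1,3)])
    show "x n = x 0" "x j \<noteq> 0" "n > 0" using j by (simp_all add: x_def)
  qed
qed

lemma Bmat_kernel_vanishing:
  assumes "FLseq k a b 1 - FLseq k a b (Suc n) \<noteq> 0 \<or> FLseq k a b 0 - FLseq k a b n \<noteq> 0"
    and "w \<in> carrier_vec n" and "Bmat n k a b *\<^sub>v w = 0\<^sub>v n"
    and "j < n" and "w $ j = 0"
  shows "w = 0\<^sub>v n"
proof (rule eq_vecI)
  define x where "x t = w $ (t mod n)" for t
  fix i assume "i < dim_vec (0\<^sub>v n)"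
  then have "i < n" by simp
  have "x i = 0"
  proof (rule periodic_first_order_recurrence_vanishing[OF _ assms(1)])
    show "(FLseq k a b 1 - FLseq k a b (Suc n)) * x t + (FLseq k a b 0 - FLseq k a b n) * x (Suc t) = 0" for t
      unfolding x_def by (rule Bmat_kernel_recurrence[OF assms(2,3)])
    show "x n = x 0" "n > 0" "x j = 0" using assms(4,5) by (simp_all add: x_def)
  qed
  then show "w $ i = 0\<^sub>v n $ i" using \<open>i < n\<close> by (simp add: x_def)
qed (use assms(2) in simp)

lemma rank_Bmat_ge:
  assumes "FLseq k a b 1 - FLseq k a b (Suc n) \<noteq> 0 \<or> FLseq k a b 0 - FLseq k a b n \<noteq> 0"
  shows "n - 1 \<le> matrank n (Bmat n k a b)"
  unfolding matrank_def
proof (rule rank_ge_if_kernel_trivial_on_last_coordinate[OF Bmat_carrier])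
  fix w assume w: "w \<in> carrier_vec n" "Bmat n k a b *\<^sub>v w = 0\<^sub>v n" "w $ (n - 1) = 0"
  show "w = 0\<^sub>v n"
  proof (cases "n = 0")
    case True
    then show ?thesis using w(1) by (intro eq_vecI) simp_all
  next
    case False
    then show ?thesis using Bmat_kernel_vanishing[OF assms w(1,2) _ w(3)] by simp
  qed
qed

lemma Bmat_mult_alternating:
  assumes "k \<noteq> 0" and "even n"
    and "FLseq k a b 1 - FLseq k a b (Suc n) = FLseq k a b 0 - FLseq k a b n"
  shows "Bmat n k a b *\<^sub>v vec n (\<lambda>j. (-1) ^ j) = 0\<^sub>v n"
proof (subst Bmat_kernel_iff[OF vec_carrier], intro allI)
  fix i
  have "k * (\<Sum>m<n. (-1) ^ m * FLseq k a b (Suc m)) = 0"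
    using assms(2,3) by (simp add: FLseq_alternating_sum)
  then have "(\<Sum>m<n. (-1) ^ m * FLseq k a b (Suc m)) = 0" using assms(1) by simp
  moreover have "(\<Sum>m<n. FLseq k a b (Suc m) * (-1) ^ ((i + m) mod n))
      = (-1) ^ i * (\<Sum>m<n. (-1) ^ m * FLseq k a b (Suc m))"
    using \<open>even n\<close> by (simp add: neg_one_power_mod_even power_add sum_distrib_left mult_ac)
  ultimately have "(\<Sum>m<n. FLseq k a b (Suc m) * (-1) ^ ((i + m) mod n)) = 0" by simp
  then show "(\<Sum>m<n. FLseq k a b (Suc m) * vec n (\<lambda>j. (-1) ^ j) $ ((i + m) mod n)) = 0"
    by simp
qed

lemma Bmat_mult_ones:
  assumes "k \<noteq> 0"
    and "FLseq k a b 1 - FLseq k a b (Suc n) = - (FLseq k a b 0 - FLseq k a b n)"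
  shows "Bmat n k a b *\<^sub>v vec n (\<lambda>j. 1) = 0\<^sub>v n"
proof (subst Bmat_kernel_iff[OF vec_carrier], intro allI)
  fix i
  have "k * (\<Sum>m<n. FLseq k a b (Suc m)) = 0"
    using assms(2) by (simp add: FLseq_sum)
  then show "(\<Sum>m<n. FLseq k a b (Suc m) * vec n (\<lambda>j. 1) $ ((i + m) mod n)) = 0"
    using assms(1) by simp
qed

lemma matrank_Bmat_le_iff:
  "n > 0 \<Longrightarrow> matrank n (Bmat n k a b) \<le> n - 1
    \<longleftrightarrow> (\<exists>w \<in> carrier_vec n. w \<noteq> 0\<^sub>v n \<and> Bmat n k a b *\<^sub>v w = 0\<^sub>v n)"
  using rank_lt_iff_nontrivial_kernel[OF Bmat_carrier, of n k a b] unfolding matrank_def by linarith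

lemma mem_Uset_iff:
  "(k, a, b) \<in> Uset n r \<longleftrightarrow> k \<notin> Bset n \<union> Cset n \<and> k \<noteq> 0 \<and> matrank n (Bmat n k a b) \<le> r
    \<and> 4 * a^3 + 27 * b^2 = 0 \<and> (a \<noteq> 0 \<or> b \<noteq> 0)"
  by (auto simp: Uset_def)

lemma matrank_eq_if_mem_Uset:
  assumes "n \<ge> 2" and "(k, a, b) \<in> Uset n (n - 1)"
  shows "matrank n (Bmat n k a b) = n - 1"
proof -
  have U: "k \<noteq> 0" "a \<noteq> 0 \<or> b \<noteq> 0" "matrank n (Bmat n k a b) \<le> n - 1"
    using assms(2) by (simp_all add: mem_Uset_iff)
  have "n - 1 \<le> matrank n (Bmat n k a b)"
    by (rule rank_Bmat_ge[OF FLseq_boundary_nonzero[OF U(1) assms(1) U(2)]])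
  then show ?thesis using U(3) by simp
qed

lemma mem_Uset_type2_or_type3:
  assumes "n > 0" and "(k, a, b) \<in> Uset n (n - 1)"
  shows "(a = a2 n k \<and> b = b2 n k) \<or> (a = a3 n k \<and> b = b3 n k)"
proof -
  have U: "k \<notin> Bset n \<union> Cset n" "matrank n (Bmat n k a b) \<le> n - 1"
    "4 * a^3 + 27 * b^2 = 0" "a \<noteq> 0 \<or> b \<noteq> 0"
    using assms(2) by (simp_all add: mem_Uset_iff)
  then have nz: "ev (Fp n) k - 1 \<noteq> 0" "ev (Gp n) k - k + 2 \<noteq> 0"
    "ev (Pp n) k - 1 \<noteq> 0" "ev (Qp n) k - k - 2 \<noteq> 0"
    by (auto simp: Bset_def Cset_def)
  obtain w where "w \<in> carrier_vec n" "w \<noteq> 0\<^sub>v n" "Bmat n k a b *\<^sub>v w = 0\<^sub>v n"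
    using U(2) matrank_Bmat_le_iff[OF assms(1)] by blast
  then have "FLseq k a b 1 - FLseq k a b (Suc n) = FLseq k a b 0 - FLseq k a b n
       \<or> FLseq k a b 1 - FLseq k a b (Suc n) = - (FLseq k a b 0 - FLseq k a b n)"
    by (rule Bmat_kernel_boundary)
  then consider "a * (ev (Fp n) k - 1) + b * (ev (Gp n) k - k + 2) = 0"
    | "a * (ev (Pp n) k - 1) + b * (ev (Qp n) k - k - 2) = 0"
    unfolding FLseq_boundary_eq_iff FLseq_boundary_eq_neg_iff by blast
  then show ?thesis
  proof cases
    case 1
    then show ?thesis unfolding a2_def b2_def
      using singular_curve_point_on_line_unique[OF nz(1,2) _ U(3,4)] by blast
  next
    case 2
    then show ?thesis unfolding a3_def b3_def
      using singular_curve_point_on_line_unique[OF nz(3,4) _ U(3,4)] by blast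
  qed
qed

lemma type2_mem_Uset:
  assumes "n > 0" and "even n" and k: "k \<notin> Bset n \<union> Cset n"
  shows "(k, a2 n k, b2 n k) \<in> Uset n (n - 1)"
proof -
  have "k \<noteq> 0" using k zero_mem_Bset[OF \<open>even n\<close>] by auto
  have "ev (Fp n) k - 1 \<noteq> 0" "ev (Gp n) k - k + 2 \<noteq> 0" using k by (auto simp: Bset_def)
  note point = singular_curve_point_on_line[OF this, folded a2_def b2_def]
  have "Bmat n k (a2 n k) (b2 n k) *\<^sub>v vec n (\<lambda>j. (-1) ^ j) = 0\<^sub>v n"
    using Bmat_mult_alternating[OF \<open>k \<noteq> 0\<close> \<open>even n\<close>] point(1) FLseq_boundary_eq_iff by blast
  moreover have "vec n (\<lambda>j. (-1::real) ^ j) \<noteq> 0\<^sub>v n"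
    using \<open>n > 0\<close> by (metis index_vec index_zero_vec(1) one_neq_zero power_0)
  ultimately have "matrank n (Bmat n k (a2 n k) (b2 n k)) \<le> n - 1"
    using matrank_Bmat_le_iff[OF \<open>n > 0\<close>] vec_carrier by blast
  then show ?thesis using k \<open>k \<noteq> 0\<close> point(2,3) by (simp add: mem_Uset_iff)
qed

lemma type3_mem_Uset:
  assumes "n > 0" and "even n" and k: "k \<notin> Bset n \<union> Cset n"
  shows "(k, a3 n k, b3 n k) \<in> Uset n (n - 1)"
proof -
  have "k \<noteq> 0" using k zero_mem_Bset[OF \<open>even n\<close>] by auto
  have "ev (Pp n) k - 1 \<noteq> 0" "ev (Qp n) k - k - 2 \<noteq> 0" using k by (auto simp: Cset_def)
  note point = singular_curve_point_on_line[OF this, folded a3_def b3_def]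
  have "Bmat n k (a3 n k) (b3 n k) *\<^sub>v vec n (\<lambda>j. 1) = 0\<^sub>v n"
    using Bmat_mult_ones[OF \<open>k \<noteq> 0\<close>] point(1) FLseq_boundary_eq_neg_iff by blast
  moreover have "vec n (\<lambda>j. 1::real) \<noteq> 0\<^sub>v n"
    using \<open>n > 0\<close> by (metis index_vec index_zero_vec(1) one_neq_zero)
  ultimately have "matrank n (Bmat n k (a3 n k) (b3 n k)) \<le> n - 1"
    using matrank_Bmat_le_iff[OF \<open>n > 0\<close>] vec_carrier by blast
  then show ?thesis using k \<open>k \<noteq> 0\<close> point(2,3) by (simp add: mem_Uset_iff)
qed

lemma Uset_eq_type2_type3:
  assumes "n > 0" and "even n"
  shows "Uset n (n - 1) = {(k, a2 n k, b2 n k) | k. k \<notin> Bset n \<union> Cset n}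
           \<union> {(k, a3 n k, b3 n k) | k. k \<notin> Bset n \<union> Cset n}"
proof (intro equalityI subsetI)
  fix x assume x: "x \<in> Uset n (n - 1)"
  obtain k a b where [simp]: "x = (k, a, b)" by (cases x)
  have "k \<notin> Bset n \<union> Cset n" using x by (simp add: mem_Uset_iff)
  then show "x \<in> {(k, a2 n k, b2 n k) | k. k \<notin> Bset n \<union> Cset n}
         \<union> {(k, a3 n k, b3 n k) | k. k \<notin> Bset n \<union> Cset n}"
    using mem_Uset_type2_or_type3[OF \<open>n > 0\<close>] x by auto
qed (use type2_mem_Uset[OF assms] type3_mem_Uset[OF assms] in blast)

theorem theorem4p14:
  fixes n :: nat
  assumes "n \<ge> 4" and "even n"
  shows "(Uset n (n - 1) =
           {(k, a2 n k, b2 n k) | k. k \<notin> Bset n \<union> Cset n}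
         \<union> {(k, a3 n k, b3 n k) | k. k \<notin> Bset n \<union> Cset n})
       \<and> finite {(k, a, b). (k, a, b) \<in> Uset n (n - 1) \<and> matrank n (Bmat n k a b) \<noteq> n - 1}
       \<and> (\<forall>r. 1 \<le> r \<and> r \<le> n - 2 \<longrightarrow>
           finite {(k, a, b). (k, a, b) \<in> Uset n (n - 1) \<and> matrank n (Bmat n k a b) = r})"
proof -
  have "n > 0" and "n \<ge> 2" using assms(1) by simp_all
  have rank: "matrank n (Bmat n k a b) = n - 1" if "(k, a, b) \<in> Uset n (n - 1)" for k a b
    by (rule matrank_eq_if_mem_Uset[OF \<open>n \<ge> 2\<close> that])
  show ?thesis
  proof (intro conjI allI impI)
    show "finite {(k, a, b). (k, a, b) \<in> Uset n (n - 1) \<and> matrank n (Bmat n k a b) \<noteq> n - 1}"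
      by (rule finite_subset[of _ "{}"]) (use rank in auto)
    show "finite {(k, a, b). (k, a, b) \<in> Uset n (n - 1) \<and> matrank n (Bmat n k a b) = r}"
      if "1 \<le> r \<and> r \<le> n - 2" for r
      by (rule finite_subset[of _ "{}"]) (use rank that \<open>n \<ge> 2\<close> in auto)
  qed (rule Uset_eq_type2_type3[OF \<open>n > 0\<close> \<open>even n\<close>])
qed

end
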